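(* Let $K\ge2$ be an integer and let $p$ be the ordered-partition distribution of any one of the following priors with $K$ components: (i) the Dirichlet multinomial process with parameter $\alpha>0$; (ii) the Pitman--Yor multinomial process with parameters $\sigma\in(0,1)$, $\alpha>-\sigma$; (iii) the normalized generalized gamma multinomial process with parameters $\sigma\in(0,1)$, $\beta>0$. Then for every fixed $k$ with $1\le k<K$, $$\limsup_{n\to\infty} c_n(k)<\infty .$$
   Context: For $n\ge 1$ and $k\in\{1,\ldots,n\}$, let $\mathcal{A}_k(n)$ be the set of ordered partitions $A=(A_1,\ldots,A_k)$ of $\{1,\ldots,n\}$ into $k$ nonempty disjoint sets, and write $n_i=|A_i|$. For $A\in\mathcal{A}_k(n)$ let $R_A=\bigcup_{i:|A_i|\ge 2}A_i$. For $j\in R_A$ with $j\in A_\ell$, let $B(A,j)\in\mathcal{A}_{k+1}(n)$ be the ordered partition with $B_i=A_i$ for $i\neq \ell$, $i\le k$, $B_\ell=A_\ell\setminus\{j\}$ and $B_{k+1}=\{j\}$. Let $\mathcal{Z}_A=\{B(A,j):j\in R_A\}$. For $n>k\ge1$ define $$c_n(k)=\frac1n\max_{A\in\mathcal{A}_k(n)}\max_{B\in\mathcal{Z}_A}\frac{p(A)}{p(B)},$$ with the conventions $0/0=0$ and $y/0=\infty$ for $y>0$. Notation: $(x)_m=x(x+1)\cdots(x+m-1)$, $(x)_0=1$; generalized factorial coefficients $C(n,\ell;\sigma)=\frac1{\ell!}\sum_{j=0}^{\ell}(-1)^j\binom{\ell}{j}(-j\sigma)_n$. For $A\in\mathcal{A}_k(n)$,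 sums $\sum_{(\ell_1,\ldots,\ell_k)}$ run over integer vectors with $\ell_i\in\{1,\ldots,n_i\}$, and $|\ell^{(k)}|=\ell_1+\cdots+\ell_k$. The partition distributions (for $k\le K$; $p(A)=0$ if $k>K$) are: (i) Dirichlet multinomial: $p(A)=\binom{K}{k}\frac{1}{(\alpha)_n}\prod_{j=1}^k(\alpha/K)_{n_j}$. (ii) Pitman--Yor multinomial: $p(A)=\binom{K}{k}\frac{1}{(\alpha+1)_{n-1}}\sum_{(\ell_1,\ldots,\ell_k)}\frac{\Gamma(\alpha/\sigma+|\ell^{(k)}|)}{\sigma\Gamma(\alpha/\sigma+1)}\prod_{i=1}^k\frac{C(n_i,\ell_i;\sigma)}{K^{\ell_i}}$. (iii) NGG multinomial: $p(A)=\binom{K}{k}\sum_{(\ell_1,\ldots,\ell_k)}\frac{V_{n,|\ell^{(k)}|}}{K^{|\ell^{(k)}|}}\prod_{i=1}^k\frac{C(n_i,\ell_i;\sigma)}{\sigma^{\ell_i}}$, where $V_{n,m}=\frac{e^{\beta}\sigma^{m-1}}{\Gamma(n)}\sum_{i=0}^{n-1}\binom{n-1}{i}(-1)^i\beta^{i/\sigma}\Gamma\!\left(m-\tfrac{i}{\sigma};\beta\right)$ with $\Gamma(x;a)=\int_x^\infty s^{a-1}e^{-s}\,\mathrm{d}s$. *)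

theory Defs
  imports "HOL-Analysis.Analysis"
begin

text \<open>Ordered partitions of {1..n} into k nonempty blocks, encoded by the block-label
  function f: element i lies in block A_(f i); f vanishes outside {1..n}.\<close>
definition ord_parts :: "nat \<Rightarrow> nat \<Rightarrow> (nat \<Rightarrow> nat) set" where
  "ord_parts n k = {f. (\<forall>i\<in>{1..n}. f i \<in> {1..k}) \<and> (\<forall>i. i \<notin> {1..n} \<longrightarrow> f i = 0)
                       \<and> (\<forall>j\<in>{1..k}. \<exists>i\<in>{1..n}. f i = j)}"

definition bsize :: "nat \<Rightarrow> (nat \<Rightarrow> nat) \<Rightarrow> nat \<Rightarrow> nat" where
  "bsize n f j = card {i\<in>{1..n}. f i = j}"

definition split_parts :: "nat \<Rightarrow> nat \<Rightarrow> (nat \<Rightarrow> nat) \<Rightarrow> (nat \<Rightarrow> nat) set" where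
  "split_parts n k f = {f(j := k + 1) | j. j \<in> {1..n} \<and> bsize n f (f j) \<ge> 2}"

definition ratio :: "real \<Rightarrow> real \<Rightarrow> ereal" where
  "ratio x y = (if y = 0 then (if x = 0 then 0 else \<infinity>) else ereal (x / y))"

text \<open>c_n(k) for a partition distribution p n k f (set to 0 when n \<le> k; irrelevant for limsup)\<close>
definition c_seq :: "(nat \<Rightarrow> nat \<Rightarrow> (nat \<Rightarrow> nat) \<Rightarrow> real) \<Rightarrow> nat \<Rightarrow> nat \<Rightarrow> ereal" where
  "c_seq p n k = (if k < n then
      ereal (1 / real n) * Max {ratio (p n k A) (p n (k+1) B) | A B. A \<in> ord_parts n k \<and> B \<in> split_parts n k A}
    else 0)"

definition gfc :: "nat \<Rightarrow> nat \<Rightarrow> real \<Rightarrow> real" where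
  "gfc n l \<sigma> = (1 / fact l) * (\<Sum>j=0..l. (-1) ^ j * real (l choose j) * pochhammer (- (real j * \<sigma>)) n)"

definition lvecs :: "nat \<Rightarrow> nat \<Rightarrow> (nat \<Rightarrow> nat) \<Rightarrow> (nat \<Rightarrow> nat) set" where
  "lvecs n k f = PiE {1..k} (\<lambda>i. {1..bsize n f i})"

definition lsum :: "nat \<Rightarrow> (nat \<Rightarrow> nat) \<Rightarrow> nat" where
  "lsum k l = (\<Sum>i\<in>{1..k}. l i)"

definition upper_gamma :: "real \<Rightarrow> real \<Rightarrow> real" where
  "upper_gamma x a = integral {a..} (\<lambda>s. s powr (x - 1) * exp (- s))"

definition V_NGG :: "real \<Rightarrow> real \<Rightarrow> nat \<Rightarrow> nat \<Rightarrow> real" where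
  "V_NGG \<sigma> \<beta> n m = exp \<beta> * \<sigma> ^ (m - 1) / Gamma (real n) *
     (\<Sum>i=0..n-1. real (n - 1 choose i) * (-1) ^ i * \<beta> powr (real i / \<sigma>)
                    * upper_gamma (real m - real i / \<sigma>) \<beta>)"

definition p_DM :: "nat \<Rightarrow> real \<Rightarrow> nat \<Rightarrow> nat \<Rightarrow> (nat \<Rightarrow> nat) \<Rightarrow> real" where
  "p_DM K \<alpha> n k f = (if k \<le> K then
     real (K choose k) / pochhammer \<alpha> n * (\<Prod>j\<in>{1..k}. pochhammer (\<alpha> / real K) (bsize n f j))
   else 0)"

definition p_PY :: "nat \<Rightarrow> real \<Rightarrow> real \<Rightarrow> nat \<Rightarrow> nat \<Rightarrow> (nat \<Rightarrow> nat) \<Rightarrow> real" where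
  "p_PY K \<sigma> \<alpha> n k f = (if k \<le> K then
     real (K choose k) / pochhammer (\<alpha> + 1) (n - 1) *
     (\<Sum>l\<in>lvecs n k f. Gamma (\<alpha> / \<sigma> + real (lsum k l)) / (\<sigma> * Gamma (\<alpha> / \<sigma> + 1)) *
        (\<Prod>i\<in>{1..k}. gfc (bsize n f i) (l i) \<sigma> / real K ^ (l i)))
   else 0)"

definition p_NGG :: "nat \<Rightarrow> real \<Rightarrow> real \<Rightarrow> nat \<Rightarrow> nat \<Rightarrow> (nat \<Rightarrow> nat) \<Rightarrow> real" where
  "p_NGG K \<sigma> \<beta> n k f = (if k \<le> K then
     real (K choose k) *
     (\<Sum>l\<in>lvecs n k f. V_NGG \<sigma> \<beta> n (lsum k l) / real K ^ (lsum k l) *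
        (\<Prod>i\<in>{1..k}. gfc (bsize n f i) (l i) \<sigma> / \<sigma> ^ (l i)))
   else 0)"

end

theory Submission
  imports Defs
begin

(* In all three models p(A) is a factor depending only on n and k times a sum over vectors l of
   G(l_1 + ... + l_k) * prod_i h(n_i, l_i), with h(M, l) = C(M, l; sigma) / r^l (in the Dirichlet
   model simply a product of rising factorials). Splitting an element off a block of size M + 1
   creates a singleton block, which contributes the factor h(1, 1). The triangular recurrence
   C(M+1, l) = sigma C(M, l-1) + (M - l sigma) C(M, l) together with G(t) <= D G(t+1) yields
   p(A) <= (1 + n D / h(1, 1)) (K choose k) / (K choose k+1) p(B). Hence max p(A) / p(B) grows at
   most linearly in n and c_n(k) stays bounded. *)

lemma alternating_binomial_sum_Suc:
  fixes P :: "nat \<Rightarrow> real"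
  shows "(\<Sum>j=0..Suc L. (-1)^j * real (Suc L choose j) * P j)
       = (\<Sum>j=0..L. (-1)^j * real (L choose j) * P j) - (\<Sum>j=0..L. (-1)^j * real (L choose j) * P (Suc j))"
proof -
  have "(\<Sum>j=0..Suc L. (-1)^j * real (Suc L choose j) * P j)
      = P 0 - (\<Sum>j=0..L. (-1)^j * real (Suc L choose Suc j) * P (Suc j))"
    by (subst sum.atLeast0_atMost_Suc_shift) (simp add: sum_negf)
  also have "\<dots> = (P 0 - (\<Sum>j=0..L. (-1)^j * real (L choose Suc j) * P (Suc j)))
      - (\<Sum>j=0..L. (-1)^j * real (L choose j) * P (Suc j))"
    by (simp add: sum.distrib algebra_simps)
  also have "P 0 - (\<Sum>j=0..L. (-1)^j * real (L choose Suc j) * P (Suc j))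
      = (\<Sum>j=0..Suc L. (-1)^j * real (L choose j) * P j)"
    by (subst sum.atLeast0_atMost_Suc_shift) (simp add: sum_negf)
  finally show ?thesis by simp
qed

lemma alternating_binomial_sum_times_index:
  fixes P :: "nat \<Rightarrow> real"
  shows "(\<Sum>j=0..Suc L. (-1)^j * real (Suc L choose j) * real j * P j)
       = - real (Suc L) * (\<Sum>j=0..L. (-1)^j * real (L choose j) * P (Suc j))"
proof -
  have binom: "real (Suc L choose Suc j) * real (Suc j) = real (Suc L) * real (L choose j)" for j
    by (metis Suc_times_binomial_eq mult.commute of_nat_mult)
  have "(\<Sum>j=0..Suc L. (-1)^j * real (Suc L choose j) * real j * P j)
      = (\<Sum>j=0..L. (-1)^Suc j * real (Suc L choose Suc j) * real (Suc j) * P (Suc j))"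
    by (subst sum.atLeast0_atMost_Suc_shift) simp
  also have "\<dots> = (\<Sum>j=0..L. - real (Suc L) * ((-1)^j * real (L choose j) * P (Suc j)))"
  proof (rule sum.cong[OF refl])
    fix j
    have "(-1)^Suc j * real (Suc L choose Suc j) * real (Suc j) * P (Suc j)
        = - ((-1)^j * P (Suc j) * (real (Suc L choose Suc j) * real (Suc j)))"
      by (simp add: algebra_simps)
    also have "\<dots> = - real (Suc L) * ((-1)^j * real (L choose j) * P (Suc j))"
      unfolding binom by (simp add: algebra_simps)
    finally show "(-1)^Suc j * real (Suc L choose Suc j) * real (Suc j) * P (Suc j)
        = - real (Suc L) * ((-1)^j * real (L choose j) * P (Suc j))" .
  qed
  finally show ?thesis by (simp add: sum_distrib_left)
qed

lemma fact_times_gfc: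
  "fact l * gfc n l \<sigma> = (\<Sum>j=0..l. (-1) ^ j * real (l choose j) * pochhammer (- (real j * \<sigma>)) n)"
  by (simp add: gfc_def)

lemma gfc_Suc_Suc:
  "gfc (Suc n) (Suc l) \<sigma> = \<sigma> * gfc n l \<sigma> + (real n - real (Suc l) * \<sigma>) * gfc n (Suc l) \<sigma>"
proof -
  define P where "P j = pochhammer (- (real j * \<sigma>)) n" for j
  define S where "S l = (\<Sum>j=0..l. (-1)^j * real (l choose j) * P j)" for l
  have "fact (Suc l) * gfc (Suc n) (Suc l) \<sigma>
      = (\<Sum>j=0..Suc l. (-1)^j * real (Suc l choose j) * (P j * (real n - real j * \<sigma>)))"
    unfolding fact_times_gfc P_def by (simp add: pochhammer_Suc)
  also have "\<dots> = real n * S (Suc l)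
      - \<sigma> * (\<Sum>j=0..Suc l. (-1)^j * real (Suc l choose j) * real j * P j)"
    unfolding S_def by (simp add: sum_distrib_left sum_subtractf algebra_simps)
  also have "\<dots> = real n * S (Suc l) + \<sigma> * real (Suc l) * (S l - S (Suc l))"
    unfolding alternating_binomial_sum_times_index S_def alternating_binomial_sum_Suc[of l P]
    by (simp add: algebra_simps)
  finally have "fact (Suc l) * gfc (Suc n) (Suc l) \<sigma>
      = real n * S (Suc l) + \<sigma> * real (Suc l) * (S l - S (Suc l))" .
  moreover have "S l' = fact l' * gfc n l' \<sigma>" for l'
    unfolding S_def P_def fact_times_gfc ..
  ultimately have "fact (Suc l) * gfc (Suc n) (Suc l) \<sigma>
      = fact (Suc l) * (\<sigma> * gfc n l \<sigma> + (real n - real (Suc l) * \<sigma>) * gfc n (Suc l) \<sigma>)"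
    by (simp add: algebra_simps del: of_nat_Suc)
  then show ?thesis by simp
qed

lemma gfc_0_0 [simp]: "gfc 0 0 \<sigma> = 1"
  by (simp add: gfc_def)

lemma gfc_0_left: "1 \<le> l \<Longrightarrow> gfc 0 l \<sigma> = 0"
  using choose_alternating_sum[of l, where 'a=real] by (simp add: gfc_def atLeast0AtMost)

lemma gfc_0_right: "1 \<le> n \<Longrightarrow> gfc n 0 \<sigma> = 0"
  by (simp add: gfc_def pochhammer_0_left)

lemma gfc_1_1 [simp]: "gfc 1 1 \<sigma> = \<sigma>"
  using gfc_Suc_Suc[of 0 0 \<sigma>] gfc_0_left[of 1 \<sigma>] by simp

lemma gfc_eq_0: "n < l \<Longrightarrow> gfc n l \<sigma> = 0"
proof (induction n arbitrary: l)
  case 0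
  then show ?case by (simp add: gfc_0_left)
next
  case (Suc n)
  then obtain l' where "l = Suc l'" "n < l'" by (cases l) auto
  then show ?case using Suc.IH by (simp add: gfc_Suc_Suc)
qed

lemma gfc_nonneg:
  assumes "0 \<le> \<sigma>" "\<sigma> \<le> 1"
  shows "0 \<le> gfc n l \<sigma>"
proof (induction n arbitrary: l)
  case 0
  then show ?case by (cases l) (simp_all add: gfc_0_left)
next
  case (Suc n)
  show ?case
  proof (cases l)
    case 0
    then show ?thesis by (simp add: gfc_0_right)
  next
    case (Suc l')
    have "0 \<le> (real n - real l * \<sigma>) * gfc n l \<sigma>"
    proof (cases "l \<le> n")
      case True
      then have "real l * \<sigma> \<le> real n"
        using assms mult_mono[of "real l" "real n" \<sigma> 1] by simp
      then show ?thesis using Suc.IH by simp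
    qed (simp add: gfc_eq_0)
    then show ?thesis using Suc.IH assms \<open>l = Suc l'\<close> by (simp add: gfc_Suc_Suc)
  qed
qed

lemma split_parts_bsize:
  assumes A: "A \<in> ord_parts n k" and B: "B \<in> split_parts n k A"
  obtains q where "q \<in> {1..k}" "2 \<le> bsize n A q" "bsize n A q \<le> n"
    "bsize n B q = bsize n A q - 1" "bsize n B (Suc k) = 1"
    "\<And>i. i \<in> {1..k} - {q} \<Longrightarrow> bsize n B i = bsize n A i"
proof -
  obtain j where j: "j \<in> {1..n}" and q2: "2 \<le> bsize n A (A j)" and B_eq: "B = A(j := k + 1)"
    using B unfolding split_parts_def by auto
  have A_range: "A i \<in> {1..k}" if "i \<in> {1..n}" for i
    using A that unfolding ord_parts_def by auto
  define q where "q = A j"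
  have q: "q \<in> {1..k}" using A_range[OF j] unfolding q_def .
  have "{i\<in>{1..n}. B i = q} = {i\<in>{1..n}. A i = q} - {j}"
    using q unfolding B_eq by auto
  then have "bsize n B q = bsize n A q - 1"
    unfolding bsize_def using j by (simp add: q_def card_Diff_singleton)
  moreover have "{i\<in>{1..n}. B i = Suc k} = {j}"
    using j A_range unfolding B_eq by force
  then have "bsize n B (Suc k) = 1" unfolding bsize_def by simp
  moreover have "bsize n B i = bsize n A i" if "i \<in> {1..k} - {q}" for i
  proof -
    have "{i'\<in>{1..n}. B i' = i} = {i'\<in>{1..n}. A i' = i}"
      using that q_def unfolding B_eq by auto
    then show ?thesis unfolding bsize_def by simp
  qed
  moreover have "bsize n A q \<le> n"
    unfolding bsize_def by (metis (no_types, lifting) card_atLeastAtMost card_mono diff_Suc_1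
        finite_atLeastAtMost mem_Collect_eq subsetI)
  ultimately show ?thesis using that q q2 unfolding q_def by blast
qed

lemma finite_ord_parts: "finite (ord_parts n k)"
proof (rule finite_subset)
  show "ord_parts n k \<subseteq> {f. \<forall>x. (x \<in> {1..n} \<longrightarrow> f x \<in> {1..k}) \<and> (x \<notin> {1..n} \<longrightarrow> f x = 0)}"
    unfolding ord_parts_def by auto
  show "finite {f. \<forall>x. (x \<in> {1..n} \<longrightarrow> f x \<in> {1..k}) \<and> (x \<notin> {1..n} \<longrightarrow> f x = (0::nat))}"
    by (rule finite_set_of_finite_funs) auto
qed

lemma finite_split_parts: "finite (split_parts n k f)"
proof (rule finite_subset)
  show "split_parts n k f \<subseteq> (\<lambda>j. f(j := k + 1)) ` {1..n}"
    unfolding split_parts_def by auto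
qed auto

lemma ex_split_parts:
  assumes "1 \<le> k" "k < n"
  obtains A B where "A \<in> ord_parts n k" "B \<in> split_parts n k A"
proof -
  define A where "A i = (if i \<in> {1..n} then min i k else 0)" for i
  have "A \<in> ord_parts n k"
    unfolding ord_parts_def using assms by (auto simp: A_def intro!: bexI)
  moreover have "{k, n} \<subseteq> {i\<in>{1..n}. A i = k}" using assms unfolding A_def by auto
  then have "2 \<le> bsize n A (A n)"
    unfolding bsize_def using assms card_mono[of "{i\<in>{1..n}. A i = k}" "{k, n}"]
    by (simp add: A_def)
  then have "A(n := k + 1) \<in> split_parts n k A"
    unfolding split_parts_def using assms by auto
  ultimately show ?thesis using that by blast
qed

lemma ratio_le:
  assumes "0 \<le> x" "0 \<le> y" "x \<le> C * y" "0 \<le> C"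
  shows "ratio x y \<le> ereal C"
proof (cases "y = 0")
  case True
  then show ?thesis using assms unfolding ratio_def by simp
next
  case False
  then have "x / y \<le> C" using assms by (simp add: divide_le_eq)
  then show ?thesis using False unfolding ratio_def by simp
qed

lemma limsup_c_seq_finite:
  assumes k: "1 \<le> k"
    and bound: "\<And>n A B. k < n \<Longrightarrow> A \<in> ord_parts n k \<Longrightarrow> B \<in> split_parts n k A \<Longrightarrow>
        0 \<le> p n k A \<and> 0 \<le> p n (Suc k) B \<and> p n k A \<le> M * real n * p n (Suc k) B"
  shows "limsup (\<lambda>n. c_seq p n k) < \<infinity>"
proof -
  define M' where "M' = max M 0"
  have "c_seq p n k \<le> ereal M'" if n: "k < n" for n
  proof -
    let ?X = "{ratio (p n k A) (p n (k+1) B) | A B. A \<in> ord_parts n k \<and> B \<in> split_parts n k A}"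
    have "?X = (\<lambda>(A, B). ratio (p n k A) (p n (k+1) B)) ` (SIGMA A:ord_parts n k. split_parts n k A)"
      by auto
    then have "finite ?X" by (simp add: finite_ord_parts finite_split_parts)
    moreover have "?X \<noteq> {}" using ex_split_parts[OF k n] by blast
    moreover have "x \<le> ereal (M' * real n)" if "x \<in> ?X" for x
    proof -
      obtain A B where AB: "A \<in> ord_parts n k" "B \<in> split_parts n k A"
        and x: "x = ratio (p n k A) (p n (k+1) B)" using \<open>x \<in> ?X\<close> by blast
      have "p n k A \<le> M' * real n * p n (Suc k) B"
        using bound[OF n AB] unfolding M'_def
        by (smt (verit, ccfv_SIG) max.cobounded1 mult_right_mono of_nat_0_le_iff)
      then show ?thesis
        unfolding x using bound[OF n AB] by (intro ratio_le) (auto simp: M'_def)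
    qed
    ultimately have "Max ?X \<le> ereal (M' * real n)" by simp
    then have "ereal (1 / real n) * Max ?X \<le> ereal (1 / real n) * ereal (M' * real n)"
      by (rule ereal_mult_left_mono) simp
    then show ?thesis unfolding c_seq_def using n by simp
  qed
  then have "limsup (\<lambda>n. c_seq p n k) \<le> ereal M'"
    by (intro Limsup_bounded) (auto simp: eventually_sequentially intro: Suc_le_lessD)
  then show ?thesis by (rule order.strict_trans1) simp
qed

definition gibbs_sum :: "(nat \<Rightarrow> real) \<Rightarrow> (nat \<Rightarrow> nat \<Rightarrow> real) \<Rightarrow> 'a set \<Rightarrow> ('a \<Rightarrow> nat) \<Rightarrow> real" where
  "gibbs_sum G h I m = (\<Sum>l\<in>PiE I (\<lambda>i. {1..m i}). G (\<Sum>i\<in>I. l i) * (\<Prod>i\<in>I. h (m i) (l i)))"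

lemma gibbs_sum_cong:
  "(\<And>i. i \<in> I \<Longrightarrow> m i = m' i) \<Longrightarrow> gibbs_sum G h I m = gibbs_sum G h I m'"
  unfolding gibbs_sum_def by (intro sum.cong PiE_cong arg_cong2[where f="(*)"] prod.cong) auto

lemma gibbs_sum_nonneg:
  "(\<And>t. 0 \<le> G t) \<Longrightarrow> (\<And>M l. 0 \<le> h M l) \<Longrightarrow> 0 \<le> gibbs_sum G h I m"
  unfolding gibbs_sum_def by (intro sum_nonneg mult_nonneg_nonneg prod_nonneg) auto

lemma gibbs_sum_mono:
  "(\<And>t. G t \<le> G' t) \<Longrightarrow> (\<And>M l. 0 \<le> h M l) \<Longrightarrow> gibbs_sum G h I m \<le> gibbs_sum G' h I m"
  unfolding gibbs_sum_def by (intro sum_mono mult_right_mono prod_nonneg) auto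

lemma gibbs_sum_scale: "gibbs_sum (\<lambda>t. c * G t) h I m = c * gibbs_sum G h I m"
  unfolding gibbs_sum_def by (simp add: sum_distrib_left mult.assoc)

lemma gibbs_sum_insert:
  assumes "finite I" "x \<notin> I"
  shows "gibbs_sum G h (insert x I) m = (\<Sum>j=1..m x. h (m x) j * gibbs_sum (\<lambda>t. G (t + j)) h I m)"
proof -
  let ?F = "\<lambda>l. G (\<Sum>i\<in>insert x I. l i) * (\<Prod>i\<in>insert x I. h (m i) (l i))"
  have F: "?F (g(x := j)) = h (m x) j * (G ((\<Sum>i\<in>I. g i) + j) * (\<Prod>i\<in>I. h (m i) (g i)))" for g j
  proof -
    have "(\<Sum>i\<in>I. (g(x := j)) i) = (\<Sum>i\<in>I. g i)" "(\<Prod>i\<in>I. h (m i) ((g(x := j)) i)) = (\<Prod>i\<in>I. h (m i) (g i))"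
      using assms(2) by (auto intro!: sum.cong prod.cong)
    then show ?thesis using assms by (simp add: add.commute)
  qed
  have "gibbs_sum G h (insert x I) m
      = (\<Sum>(j, g)\<in>{1..m x} \<times> PiE I (\<lambda>i. {1..m i}). ?F (g(x := j)))"
    unfolding gibbs_sum_def PiE_insert_eq
    by (subst sum.reindex[OF inj_combinator[OF assms(2)]]) (simp add: case_prod_unfold)
  also have "\<dots> = (\<Sum>j=1..m x. \<Sum>g\<in>PiE I (\<lambda>i. {1..m i}). ?F (g(x := j)))"
    by (rule sum.cartesian_product[symmetric])
  finally show ?thesis
    unfolding F gibbs_sum_def by (simp add: sum_distrib_left)
qed

(* h_Suc_le abstracts the recurrence of C(M, l; sigma) / r^l, using M - l sigma <= N. *)
locale gibbs_weights =
  fixes G :: "nat \<Rightarrow> real" and h :: "nat \<Rightarrow> nat \<Rightarrow> real" and D :: real and N :: nat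
  assumes h_nonneg: "0 \<le> h M l"
    and h_0_right: "1 \<le> M \<Longrightarrow> h M 0 = 0"
    and h_eq_0: "M < l \<Longrightarrow> h M l = 0"
    and h_Suc_le: "1 \<le> l \<Longrightarrow> Suc M \<le> N \<Longrightarrow> h (Suc M) l \<le> h 1 1 * h M (l - 1) + real N * h M l"
    and h_1_1_pos: "0 < h 1 1"
    and G_nonneg: "1 \<le> t \<Longrightarrow> 0 \<le> G t"
    and G_le_Suc: "1 \<le> t \<Longrightarrow> G t \<le> D * G (Suc t)"
begin

lemma triangular_sum_le:
  fixes \<Phi> :: "nat \<Rightarrow> real"
  assumes M: "1 \<le> M" "Suc M \<le> N"
    and \<Phi>_nonneg: "\<And>j. 1 \<le> j \<Longrightarrow> 0 \<le> \<Phi> j" and \<Phi>_le_Suc: "\<And>j. 1 \<le> j \<Longrightarrow> \<Phi> j \<le> D * \<Phi> (Suc j)"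
  shows "(\<Sum>j=1..Suc M. h (Suc M) j * \<Phi> j) \<le> (h 1 1 + real N * D) * (\<Sum>j=1..M. h M j * \<Phi> (Suc j))"
proof -
  define S where "S = (\<Sum>j=1..M. h M j * \<Phi> (Suc j))"
  have shift: "(\<Sum>j=1..Suc M. h M (j - 1) * \<Phi> j) = S"
  proof -
    have "(\<Sum>j=1..Suc M. h M (j - 1) * \<Phi> j) = (\<Sum>j=0..M. h M j * \<Phi> (Suc j))"
      using sum.shift_bounds_cl_Suc_ivl[of "\<lambda>j. h M (j - 1) * \<Phi> j" 0 M] by simp
    then show ?thesis
      unfolding S_def using h_0_right[OF M(1)] by (simp add: sum.atLeast_Suc_atMost)
  qed
  have drop: "(\<Sum>j=1..Suc M. h M j * \<Phi> j) \<le> D * S"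
  proof -
    have "(\<Sum>j=1..Suc M. h M j * \<Phi> j) = (\<Sum>j=1..M. h M j * \<Phi> j)"
      using h_eq_0[of M "Suc M"] by simp
    also have "\<dots> \<le> (\<Sum>j=1..M. h M j * (D * \<Phi> (Suc j)))"
      using \<Phi>_le_Suc h_nonneg by (intro sum_mono mult_left_mono) auto
    finally show ?thesis unfolding S_def by (simp add: sum_distrib_left algebra_simps)
  qed
  have "(\<Sum>j=1..Suc M. h (Suc M) j * \<Phi> j)
      \<le> (\<Sum>j=1..Suc M. (h 1 1 * h M (j - 1) + real N * h M j) * \<Phi> j)"
    using h_Suc_le[OF _ M(2)] \<Phi>_nonneg by (intro sum_mono mult_right_mono) auto
  also have "\<dots> = h 1 1 * S + real N * (\<Sum>j=1..Suc M. h M j * \<Phi> j)"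
    unfolding shift[symmetric] by (simp add: sum.distrib sum_distrib_left algebra_simps)
  also have "\<dots> \<le> h 1 1 * S + real N * (D * S)"
    using drop by (intro add_left_mono mult_left_mono) auto
  finally show ?thesis unfolding S_def by (simp add: algebra_simps)
qed

lemma gibbs_sum_insert_nonneg:
  assumes "finite I" "x \<notin> I"
  shows "0 \<le> gibbs_sum G h (insert x I) m"
  unfolding gibbs_sum_insert[OF assms]
  by (intro sum_nonneg mult_nonneg_nonneg h_nonneg gibbs_sum_nonneg G_nonneg) auto

lemma gibbs_sum_split_le:
  assumes I: "finite I" "q \<notin> I" "x \<notin> insert q I"
    and m: "2 \<le> m q" "m q \<le> N" "m' q = m q - 1" "m' x = 1" "\<And>i. i \<in> I \<Longrightarrow> m' i = m i"
  shows "gibbs_sum G h (insert q I) m \<le> (1 + real N * D / h 1 1) * gibbs_sum G h (insert x (insert q I)) m'"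
proof -
  define M where "M = m q - 1"
  \<comment> \<open>Phi j sums over the blocks in I, the block q carrying the index j. In the refined
    partition the singleton block x forces its index to be 1, which shifts the argument of G.\<close>
  define \<Phi> where "\<Phi> j = gibbs_sum (\<lambda>t. G (t + j)) h I m" for j
  have M: "1 \<le> M" "Suc M \<le> N" "m q = Suc M" using m unfolding M_def by auto
  have \<Phi>_nonneg: "0 \<le> \<Phi> j" if "1 \<le> j" for j
    unfolding \<Phi>_def using that by (intro gibbs_sum_nonneg G_nonneg h_nonneg) auto
  have \<Phi>_le_Suc: "\<Phi> j \<le> D * \<Phi> (Suc j)" if "1 \<le> j" for j
    unfolding \<Phi>_def gibbs_sum_scale[symmetric] using that
    by (intro gibbs_sum_mono h_nonneg) (simp add: G_le_Suc)
  have "gibbs_sum G h (insert x (insert q I)) m' = h 1 1 * gibbs_sum (\<lambda>t. G (t + 1)) h (insert q I) m'"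
    using I m by (simp add: gibbs_sum_insert)
  also have "gibbs_sum (\<lambda>t. G (t + 1)) h (insert q I) m' = (\<Sum>j=1..M. h M j * \<Phi> (Suc j))"
    unfolding \<Phi>_def using I m gibbs_sum_cong[of I m' m] by (simp add: gibbs_sum_insert M_def)
  finally have rhs: "gibbs_sum G h (insert x (insert q I)) m' = h 1 1 * (\<Sum>j=1..M. h M j * \<Phi> (Suc j))" .
  have "gibbs_sum G h (insert q I) m = (\<Sum>j=1..Suc M. h (Suc M) j * \<Phi> j)"
    unfolding \<Phi>_def using I M by (simp add: gibbs_sum_insert)
  also have "\<dots> \<le> (h 1 1 + real N * D) * (\<Sum>j=1..M. h M j * \<Phi> (Suc j))"
    using M \<Phi>_nonneg \<Phi>_le_Suc by (intro triangular_sum_le)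
  also have "\<dots> = (1 + real N * D / h 1 1) * gibbs_sum G h (insert x (insert q I)) m'"
    unfolding rhs using h_1_1_pos by (simp add: field_simps)
  finally show ?thesis .
qed

lemma gibbs_sum_atLeastAtMost_nonneg: "1 \<le> (k::nat) \<Longrightarrow> 0 \<le> gibbs_sum G h {1..k} m"
  using gibbs_sum_insert_nonneg[of "{Suc 1..k}" 1 m] by (simp add: atLeastAtMost_insertL)

lemma gibbs_sum_split_parts_le:
  assumes "A \<in> ord_parts N k" "B \<in> split_parts N k A"
  shows "gibbs_sum G h {1..k} (bsize N A) \<le> (1 + real N * D / h 1 1) * gibbs_sum G h {1..Suc k} (bsize N B)"
proof -
  obtain q where q: "q \<in> {1..k}" "2 \<le> bsize N A q" "bsize N A q \<le> N"
    "bsize N B q = bsize N A q - 1" "bsize N B (Suc k) = 1"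
    "\<And>i. i \<in> {1..k} - {q} \<Longrightarrow> bsize N B i = bsize N A i"
    using split_parts_bsize[OF assms] by blast
  define I where "I = {1..k} - {q}"
  have I: "{1..k} = insert q I" "{1..Suc k} = insert (Suc k) (insert q I)"
    using q(1) unfolding I_def by auto
  have "gibbs_sum G h (insert q I) (bsize N A)
      \<le> (1 + real N * D / h 1 1) * gibbs_sum G h (insert (Suc k) (insert q I)) (bsize N B)"
    by (rule gibbs_sum_split_le) (use q in \<open>auto simp: I_def\<close>)
  then show ?thesis by (simp only: I)
qed

end

lemma limsup_c_seq_gibbs_finite:
  assumes k: "1 \<le> k" "k < K"
    and p_eq: "\<And>n j f. j \<le> K \<Longrightarrow> p n j f = real (K choose j) * w n * gibbs_sum (G n) h {1..j} (bsize n f)"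
    and w_nonneg: "\<And>n. 0 \<le> w n"
    and weights: "\<And>n. 1 \<le> n \<Longrightarrow> gibbs_weights (G n) h D n"
  shows "limsup (\<lambda>n. c_seq p n k) < \<infinity>"
proof (rule limsup_c_seq_finite[OF k(1)])
  fix n A B assume n: "k < n" and A: "A \<in> ord_parts n k" and B: "B \<in> split_parts n k A"
  interpret gibbs_weights "G n" h D n using weights n k by simp
  define SA where "SA = gibbs_sum (G n) h {1..k} (bsize n A)"
  define SB where "SB = gibbs_sum (G n) h {1..Suc k} (bsize n B)"
  define E where "E = D / h 1 1"
  have SA: "0 \<le> SA" and SB: "0 \<le> SB"
    unfolding SA_def SB_def using k gibbs_sum_atLeastAtMost_nonneg by auto
  have C: "0 < real (K choose Suc k)" using k by simp
  have "SA \<le> (1 + real n * E) * SB"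
    unfolding SA_def SB_def E_def using gibbs_sum_split_parts_le[OF A B] by simp
  also have "\<dots> \<le> (1 + E) * real n * SB"
    using SB n by (intro mult_right_mono) (auto simp: algebra_simps)
  finally have "real (K choose k) * w n * SA \<le> real (K choose k) * w n * ((1 + E) * real n * SB)"
    using w_nonneg by (intro mult_left_mono) auto
  also have "\<dots> = (real (K choose k) / real (K choose Suc k) * (1 + E)) * real n
      * (real (K choose Suc k) * w n * SB)"
    using C by (simp add: field_simps)
  finally show "0 \<le> p n k A \<and> 0 \<le> p n (Suc k) B \<and>
      p n k A \<le> (real (K choose k) / real (K choose Suc k) * (1 + E)) * real n * p n (Suc k) B"
    unfolding p_eq[OF less_imp_le[OF k(2)]] p_eq[OF Suc_leI[OF k(2)]] SA_def[symmetric] SB_def[symmetric]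
    using SA SB w_nonneg by simp
qed

lemma p_DM_split_le:
  assumes \<alpha>: "0 < \<alpha>" and k: "k < K" and A: "A \<in> ord_parts n k" and B: "B \<in> split_parts n k A"
  defines "c \<equiv> \<alpha> / real K"
  shows "0 \<le> p_DM K \<alpha> n k A \<and> 0 \<le> p_DM K \<alpha> n (Suc k) B \<and>
    p_DM K \<alpha> n k A \<le> (real (K choose k) / real (K choose Suc k) * ((c + 1) / c)) * real n * p_DM K \<alpha> n (Suc k) B"
proof -
  obtain q where q: "q \<in> {1..k}" "2 \<le> bsize n A q" "bsize n A q \<le> n"
    "bsize n B q = bsize n A q - 1" "bsize n B (Suc k) = 1"
    "\<And>i. i \<in> {1..k} - {q} \<Longrightarrow> bsize n B i = bsize n A i"
    using split_parts_bsize[OF A B] by blast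
  define I where "I = {1..k} - {q}"
  define m where "m = bsize n A q - 1"
  define R where "R = (\<Prod>i\<in>I. pochhammer c (bsize n A i))"
  define P where "P = pochhammer \<alpha> n"
  have c: "0 < c" using \<alpha> k unfolding c_def by simp
  have P: "0 < P" unfolding P_def using \<alpha> by (simp add: pochhammer_pos)
  have R: "0 \<le> R" unfolding R_def using c by (intro prod_nonneg pochhammer_nonneg) auto
  have C: "0 < real (K choose Suc k)" using k by simp
  have I: "{1..k} = insert q I" "{1..Suc k} = insert (Suc k) (insert q I)" "finite I" "q \<notin> I" "Suc k \<notin> insert q I"
    using q(1) unfolding I_def by auto
  have qm: "bsize n A q = Suc m" unfolding m_def using q(2) by simp
  have "(\<Prod>i\<in>{1..k}. pochhammer c (bsize n A i)) = pochhammer c m * R * (c + real m)"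
    unfolding I(1) R_def using I by (simp add: qm pochhammer_Suc)
  then have pA: "p_DM K \<alpha> n k A = real (K choose k) / P * (pochhammer c m * R) * (c + real m)"
    unfolding p_DM_def P_def c_def using k by simp
  have "(\<Prod>i\<in>{1..Suc k}. pochhammer c (bsize n B i)) = c * (pochhammer c m * R)"
  proof -
    have "(\<Prod>i\<in>I. pochhammer c (bsize n B i)) = R"
      unfolding R_def using q(6) by (intro prod.cong) (auto simp: I_def)
    then show ?thesis
      unfolding I(2) using I q(4,5) by (simp add: m_def)
  qed
  then have pB: "p_DM K \<alpha> n (Suc k) B = real (K choose Suc k) / P * (c * (pochhammer c m * R))"
    unfolding p_DM_def P_def c_def using k by simp
  have X: "0 \<le> pochhammer c m * R" using c R by (simp add: pochhammer_nonneg)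
  have nonneg: "0 \<le> p_DM K \<alpha> n k A" "0 \<le> p_DM K \<alpha> n (Suc k) B"
    unfolding pA pB using X P c by (auto intro!: mult_nonneg_nonneg)
  have "real m \<le> real n" "c \<le> c * real n"
    using q(2,3) c unfolding m_def by auto
  then have "c + real m \<le> (c + 1) * real n" by (simp add: algebra_simps)
  then have "p_DM K \<alpha> n k A \<le> real (K choose k) / P * (pochhammer c m * R) * ((c + 1) * real n)"
    unfolding pA using X P by (intro mult_left_mono) auto
  also have "\<dots> = (real (K choose k) / real (K choose Suc k) * ((c + 1) / c)) * real n * p_DM K \<alpha> n (Suc k) B"
    unfolding pB using c C P by (simp add: field_simps)
  finally show ?thesis using nonneg by blast
qed

lemma limsup_c_seq_p_DM_finite:
  assumes k: "1 \<le> k" "k < K" and \<alpha>: "0 < \<alpha>"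
  shows "limsup (\<lambda>n. c_seq (p_DM K \<alpha>) n k) < \<infinity>"
  using p_DM_split_le[OF \<alpha> k(2)] by (intro limsup_c_seq_finite[OF k(1)])

lemma gibbs_weights_gfc:
  assumes \<sigma>: "0 < \<sigma>" "\<sigma> \<le> 1" and r: "0 < r"
    and G_nonneg: "\<And>t. 1 \<le> t \<Longrightarrow> 0 \<le> G t" and G_le_Suc: "\<And>t. 1 \<le> t \<Longrightarrow> G t \<le> D * G (Suc t)"
  shows "gibbs_weights G (\<lambda>M l. gfc M l \<sigma> / r ^ l) D N"
proof
  fix M l :: nat
  show "0 \<le> gfc M l \<sigma> / r ^ l" using gfc_nonneg[OF less_imp_le[OF \<sigma>(1)] \<sigma>(2)] r by simp
  show "1 \<le> M \<Longrightarrow> gfc M 0 \<sigma> / r ^ 0 = 0" by (simp add: gfc_0_right)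
  show "M < l \<Longrightarrow> gfc M l \<sigma> / r ^ l = 0" by (simp add: gfc_eq_0)
  assume l: "1 \<le> l" and M: "Suc M \<le> N"
  then obtain l' where l': "l = Suc l'" by (cases l) auto
  have "real M \<le> real N" "0 \<le> real l * \<sigma>" using M \<sigma> by auto
  then have "real M - real l * \<sigma> \<le> real N" by linarith
  then have "(real M - real l * \<sigma>) * (gfc M l \<sigma> / r ^ l) \<le> real N * (gfc M l \<sigma> / r ^ l)"
    using gfc_nonneg[OF less_imp_le[OF \<sigma>(1)] \<sigma>(2)] r by (intro mult_right_mono) auto
  then show "gfc (Suc M) l \<sigma> / r ^ l
      \<le> gfc 1 1 \<sigma> / r ^ 1 * (gfc M (l - 1) \<sigma> / r ^ (l - 1)) + real N * (gfc M l \<sigma> / r ^ l)"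
    unfolding l' gfc_Suc_Suc gfc_1_1 using r by (simp add: field_simps)
next
  show "0 < gfc 1 1 \<sigma> / r ^ 1" unfolding gfc_1_1 using \<sigma> r by simp
qed (use G_nonneg G_le_Suc in auto)

lemma Gamma_le_Gamma_Suc:
  fixes a :: real
  assumes "-1 < a" "1 \<le> t"
  shows "Gamma (a + real t) \<le> 1 / (a + 1) * Gamma (a + real (Suc t))"
proof -
  have pos: "0 < a + real t" using assms by simp
  then have "a + real t \<notin> \<int>\<^sub>\<le>\<^sub>0" using nonpos_Ints_nonpos by fastforce
  then have "Gamma (a + real t + 1) = (a + real t) * Gamma (a + real t)" by (rule Gamma_plus1)
  moreover have "a + real (Suc t) = a + real t + 1" by simp
  ultimately have "Gamma (a + real (Suc t)) = (a + real t) * Gamma (a + real t)" by (simp only:)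
  moreover have "(a + 1) * Gamma (a + real t) \<le> (a + real t) * Gamma (a + real t)"
    using assms pos by (intro mult_right_mono) (auto intro: less_imp_le Gamma_real_pos)
  ultimately show ?thesis using assms by (simp add: field_simps)
qed

lemma limsup_c_seq_p_PY_finite:
  assumes k: "1 \<le> k" "k < K" and \<sigma>: "0 < \<sigma>" "\<sigma> < 1" and \<alpha>: "- \<sigma> < \<alpha>"
  shows "limsup (\<lambda>n. c_seq (p_PY K \<sigma> \<alpha>) n k) < \<infinity>"
proof (rule limsup_c_seq_gibbs_finite[OF k])
  define a where "a = \<alpha> / \<sigma>"
  have a: "-1 < a" unfolding a_def using \<sigma> \<alpha> by (simp add: field_simps)
  show "0 \<le> 1 / pochhammer (\<alpha> + 1) (n - 1)" for n
    using \<sigma> \<alpha> by (simp add: pochhammer_nonneg)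
  show "p_PY K \<sigma> \<alpha> n j f = real (K choose j) * (1 / pochhammer (\<alpha> + 1) (n - 1))
      * gibbs_sum (\<lambda>t. Gamma (a + real t) / (\<sigma> * Gamma (a + 1))) (\<lambda>M l. gfc M l \<sigma> / real K ^ l) {1..j} (bsize n f)"
    if "j \<le> K" for n j f
    using that unfolding p_PY_def gibbs_sum_def lvecs_def lsum_def a_def
    by (simp add: sum_distrib_left mult.assoc)
  show "gibbs_weights (\<lambda>t. Gamma (a + real t) / (\<sigma> * Gamma (a + 1))) (\<lambda>M l. gfc M l \<sigma> / real K ^ l)
      (1 / (a + 1)) n" for n
  proof (rule gibbs_weights_gfc)
    show "0 < real K" using k by simp
    have "0 < \<sigma> * Gamma (a + 1)" using a \<sigma> by (simp add: Gamma_real_pos)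
    then show "0 \<le> Gamma (a + real t) / (\<sigma> * Gamma (a + 1))" if "1 \<le> t" for t
      using a that by (simp add: Gamma_real_pos less_imp_le)
    show "Gamma (a + real t) / (\<sigma> * Gamma (a + 1)) \<le> 1 / (a + 1) * (Gamma (a + real (Suc t)) / (\<sigma> * Gamma (a + 1)))"
      if "1 \<le> t" for t
      using divide_right_mono[OF Gamma_le_Gamma_Suc[OF a that], of "\<sigma> * Gamma (a + 1)"]
        \<open>0 < \<sigma> * Gamma (a + 1)\<close> by simp
  qed (use \<sigma> in auto)
qed

lemma powr_exp_integrable_atLeast:
  fixes a c :: real
  assumes a: "0 < a"
  shows "(\<lambda>s. s powr c * exp (- s)) integrable_on {a..}"
proof -
  define c' where "c' = max c 0"
  have "((\<lambda>t. t powr ((c' + 1) - 1) / exp t) has_integral Gamma (c' + 1)) {0..}"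
    by (rule Gamma_integral_real) (simp add: c'_def)
  then have "(\<lambda>t. t powr c' / exp t) integrable_on {0..}"
    by (auto simp: integrable_on_def)
  then have "(\<lambda>t. t powr c' / exp t) absolutely_integrable_on {0..}"
    by (rule nonnegative_absolutely_integrable_1) auto
  then have "(\<lambda>t. t powr c' / exp t) absolutely_integrable_on {a..}"
    by (rule set_integrable_subset) (use a in auto)
  then have "(\<lambda>t. t powr c' * exp (- t)) integrable_on {a..}"
    by (simp add: absolutely_integrable_on_def exp_minus field_simps)
  then have dom: "(\<lambda>t. a powr (c - c') * (t powr c' * exp (- t))) integrable_on {a..}"
    by (rule integrable_on_mult_right)
  have "(\<lambda>s. s powr c * exp (- s)) \<in> borel_measurable (lebesgue_on {a..})"
    using a by (intro continuous_imp_measurable_on_sets_lebesgue continuous_intros) auto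
  then have "(\<lambda>s. s powr c * exp (- s)) absolutely_integrable_on {a..}"
  proof (rule measurable_bounded_by_integrable_imp_absolutely_integrable[OF _ _ dom])
    fix s assume s: "s \<in> {a..}"
    then have "s powr (c - c') \<le> a powr (c - c')"
      using a by (intro powr_mono2') (auto simp: c'_def)
    then have "s powr c \<le> a powr (c - c') * s powr c'"
      using s a by (simp add: powr_diff field_simps)
    then show "norm (s powr c * exp (- s)) \<le> a powr (c - c') * (s powr c' * exp (- s))"
      by (simp add: abs_mult)
  qed simp
  then show ?thesis by (simp add: absolutely_integrable_on_def)
qed

(* Binomially expanding this factor produces the alternating sum in V_NGG (ngg_integrand_eq_sum):
   up to a positive constant, V_NGG is the integral of s^(m-1) e^(-s) against a nonnegative weight
   on [beta, inf), which makes it nonnegative and at least geometrically increasing in m. *)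
definition ngg_factor :: "real \<Rightarrow> real \<Rightarrow> nat \<Rightarrow> real \<Rightarrow> real" where
  "ngg_factor \<sigma> \<beta> n s = (1 - (\<beta> / s) powr (1 / \<sigma>)) ^ (n - 1)"

lemma ngg_factor_nonneg:
  assumes "0 < \<sigma>" "0 < \<beta>" "\<beta> \<le> s"
  shows "0 \<le> ngg_factor \<sigma> \<beta> n s"
proof -
  have "(\<beta> / s) powr (1 / \<sigma>) \<le> 1" using assms by (intro powr_le1) auto
  then show ?thesis unfolding ngg_factor_def by simp
qed

lemma ngg_integrand_eq_sum:
  assumes \<beta>: "0 < \<beta>" "\<beta> \<le> s"
  shows "s powr (x - 1) * exp (- s) * ngg_factor \<sigma> \<beta> n s
       = (\<Sum>i=0..n-1. real (n - 1 choose i) * (-1) ^ i * \<beta> powr (real i / \<sigma>)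
           * (s powr ((x - real i / \<sigma>) - 1) * exp (- s)))"
proof -
  have s: "0 < s" using \<beta> by simp
  define y where "y = (\<beta> / s) powr (1 / \<sigma>)"
  have "ngg_factor \<sigma> \<beta> n s = (- y + 1) ^ (n - 1)"
    unfolding ngg_factor_def y_def by simp
  also have "\<dots> = (\<Sum>i\<le>n-1. real (n - 1 choose i) * (- y) ^ i * 1 ^ (n - 1 - i))"
    by (rule binomial_ring)
  also have "\<dots> = (\<Sum>i=0..n-1. real (n - 1 choose i) * (-1) ^ i * y ^ i)"
    by (simp add: atLeast0AtMost power_minus[of y] mult.assoc)
  finally have factor: "ngg_factor \<sigma> \<beta> n s = (\<Sum>i=0..n-1. real (n - 1 choose i) * (-1) ^ i * y ^ i)" .
  have "s powr (x - 1) * exp (- s) * (real (n - 1 choose i) * (-1) ^ i * y ^ i)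
      = real (n - 1 choose i) * (-1) ^ i * \<beta> powr (real i / \<sigma>) * (s powr ((x - real i / \<sigma>) - 1) * exp (- s))"
    for i
  proof -
    have "y ^ i = \<beta> powr (real i / \<sigma>) / s powr (real i / \<sigma>)"
      unfolding y_def using \<beta> s by (simp add: powr_realpow[symmetric] powr_powr powr_divide)
    moreover have "s powr ((x - real i / \<sigma>) - 1) = s powr (x - 1) / s powr (real i / \<sigma>)"
      by (simp add: powr_diff[symmetric] algebra_simps)
    ultimately have y_i: "s powr (x - 1) * y ^ i = \<beta> powr (real i / \<sigma>) * s powr ((x - real i / \<sigma>) - 1)"
      by simp
    have "s powr (x - 1) * exp (- s) * (real (n - 1 choose i) * (-1) ^ i * y ^ i)
        = real (n - 1 choose i) * (-1) ^ i * (s powr (x - 1) * y ^ i) * exp (- s)"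
      by (simp only: mult_ac)
    also have "\<dots> = real (n - 1 choose i) * (-1) ^ i * (\<beta> powr (real i / \<sigma>) * s powr ((x - real i / \<sigma>) - 1)) * exp (- s)"
      by (simp only: y_i)
    finally show ?thesis by (simp only: mult_ac)
  qed
  then show ?thesis
    unfolding factor sum_distrib_left by (intro sum.cong refl)
qed

lemma ngg_integrand_integrable:
  assumes "0 < \<beta>"
  shows "(\<lambda>s. s powr (x - 1) * exp (- s) * ngg_factor \<sigma> \<beta> n s) integrable_on {\<beta>..}"
proof -
  have "(\<lambda>s. \<Sum>i=0..n-1. real (n - 1 choose i) * (-1) ^ i * \<beta> powr (real i / \<sigma>)
           * (s powr ((x - real i / \<sigma>) - 1) * exp (- s))) integrable_on {\<beta>..}"
    using assms by (intro integrable_sum integrable_on_mult_right powr_exp_integrable_atLeast) auto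
  then show ?thesis
    by (rule integrable_eq) (use assms ngg_integrand_eq_sum in auto)
qed

lemma V_NGG_eq_integral:
  assumes "0 < \<beta>"
  shows "V_NGG \<sigma> \<beta> n m = exp \<beta> * \<sigma> ^ (m - 1) / Gamma (real n)
           * integral {\<beta>..} (\<lambda>s. s powr (real m - 1) * exp (- s) * ngg_factor \<sigma> \<beta> n s)"
proof -
  have "integral {\<beta>..} (\<lambda>s. s powr (real m - 1) * exp (- s) * ngg_factor \<sigma> \<beta> n s)
      = integral {\<beta>..} (\<lambda>s. \<Sum>i=0..n-1. real (n - 1 choose i) * (-1) ^ i * \<beta> powr (real i / \<sigma>)
           * (s powr ((real m - real i / \<sigma>) - 1) * exp (- s)))"
    by (intro integral_cong) (use assms ngg_integrand_eq_sum in auto)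
  also have "\<dots> = (\<Sum>i=0..n-1. real (n - 1 choose i) * (-1) ^ i * \<beta> powr (real i / \<sigma>)
                    * upper_gamma (real m - real i / \<sigma>) \<beta>)"
    unfolding upper_gamma_def using assms
    by (subst integral_sum) (auto intro: integrable_on_mult_right powr_exp_integrable_atLeast)
  finally show ?thesis unfolding V_NGG_def by simp
qed

lemma V_NGG_nonneg:
  assumes "0 < \<sigma>" "0 < \<beta>" "1 \<le> n"
  shows "0 \<le> V_NGG \<sigma> \<beta> n m"
proof -
  have "0 \<le> integral {\<beta>..} (\<lambda>s. s powr (real m - 1) * exp (- s) * ngg_factor \<sigma> \<beta> n s)"
    using assms by (intro integral_nonneg ngg_integrand_integrable) (simp_all add: ngg_factor_nonneg)
  then show ?thesis unfolding V_NGG_eq_integral[OF assms(2)] using assms by simp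
qed

lemma V_NGG_le_Suc:
  assumes \<sigma>: "0 < \<sigma>" and \<beta>: "0 < \<beta>" and "1 \<le> n" "1 \<le> m"
  shows "V_NGG \<sigma> \<beta> n m \<le> 1 / (\<sigma> * \<beta>) * V_NGG \<sigma> \<beta> n (Suc m)"
proof -
  define J where "J m = integral {\<beta>..} (\<lambda>s. s powr (real m - 1) * exp (- s) * ngg_factor \<sigma> \<beta> n s)" for m
  have "\<beta> * J m = integral {\<beta>..} (\<lambda>s. \<beta> * (s powr (real m - 1) * exp (- s) * ngg_factor \<sigma> \<beta> n s))"
    unfolding J_def by simp
  also have "\<dots> \<le> J (Suc m)"
    unfolding J_def
  proof (intro integral_le integrable_on_mult_right ngg_integrand_integrable \<beta>)
    fix s assume s: "s \<in> {\<beta>..}"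
    then have "s powr (real (Suc m) - 1) = s * s powr (real m - 1)"
      using \<beta> powr_add[of s 1 "real m - 1"] by simp
    moreover have "0 \<le> s powr (real m - 1) * exp (- s) * ngg_factor \<sigma> \<beta> n s"
      using s \<sigma> \<beta> by (simp add: ngg_factor_nonneg)
    ultimately show "\<beta> * (s powr (real m - 1) * exp (- s) * ngg_factor \<sigma> \<beta> n s)
        \<le> s powr (real (Suc m) - 1) * exp (- s) * ngg_factor \<sigma> \<beta> n s"
      using s by (simp add: mult.assoc mult_right_mono)
  qed
  finally have J: "J m \<le> J (Suc m) / \<beta>" using \<beta> by (simp add: field_simps)
  have "\<sigma> ^ (Suc m - 1) = \<sigma> * \<sigma> ^ (m - 1)" using \<open>1 \<le> m\<close> by (cases m) auto
  moreover have "0 < Gamma (real n)" using \<open>1 \<le> n\<close> by simp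
  ultimately show ?thesis
    unfolding V_NGG_eq_integral[OF \<beta>] J_def[symmetric]
    using mult_left_mono[OF J, of "exp \<beta> * \<sigma> ^ (m - 1) / Gamma (real n)"] \<sigma> \<beta>
    by (simp add: field_simps)
qed

lemma limsup_c_seq_p_NGG_finite:
  assumes k: "1 \<le> k" "k < K" and \<sigma>: "0 < \<sigma>" "\<sigma> < 1" and \<beta>: "0 < \<beta>"
  shows "limsup (\<lambda>n. c_seq (p_NGG K \<sigma> \<beta>) n k) < \<infinity>"
proof (rule limsup_c_seq_gibbs_finite[OF k])
  show "p_NGG K \<sigma> \<beta> n j f = real (K choose j) * 1
      * gibbs_sum (\<lambda>t. V_NGG \<sigma> \<beta> n t / real K ^ t) (\<lambda>M l. gfc M l \<sigma> / \<sigma> ^ l) {1..j} (bsize n f)"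
    if "j \<le> K" for n j f
    using that unfolding p_NGG_def gibbs_sum_def lvecs_def lsum_def by simp
  show "gibbs_weights (\<lambda>t. V_NGG \<sigma> \<beta> n t / real K ^ t) (\<lambda>M l. gfc M l \<sigma> / \<sigma> ^ l)
      (real K / (\<sigma> * \<beta>)) n" if n: "1 \<le> n" for n
  proof (rule gibbs_weights_gfc)
    have K: "0 < real K" using k by simp
    show "0 \<le> V_NGG \<sigma> \<beta> n t / real K ^ t" for t
      using V_NGG_nonneg[OF \<sigma>(1) \<beta> n] K by simp
    show "V_NGG \<sigma> \<beta> n t / real K ^ t \<le> real K / (\<sigma> * \<beta>) * (V_NGG \<sigma> \<beta> n (Suc t) / real K ^ Suc t)"
      if "1 \<le> t" for t
      using divide_right_mono[OF V_NGG_le_Suc[OF \<sigma>(1) \<beta> n that], of "real K ^ t"] K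
      by (simp add: field_simps)
  qed (use \<sigma> in auto)
qed (rule zero_le_one)

theorem proposition2:
  fixes K k :: nat
  assumes "K \<ge> 2" and "1 \<le> k" and "k < K"
  shows "(\<forall>\<alpha>::real. \<alpha> > 0 \<longrightarrow> limsup (\<lambda>n. c_seq (p_DM K \<alpha>) n k) < \<infinity>)
       \<and> (\<forall>\<sigma> \<alpha>::real. 0 < \<sigma> \<and> \<sigma> < 1 \<and> \<alpha> > - \<sigma> \<longrightarrow> limsup (\<lambda>n. c_seq (p_PY K \<sigma> \<alpha>) n k) < \<infinity>)
       \<and> (\<forall>\<sigma> \<beta>::real. 0 < \<sigma> \<and> \<sigma> < 1 \<and> \<beta> > 0 \<longrightarrow> limsup (\<lambda>n. c_seq (p_NGG K \<sigma> \<beta>) n k) < \<infinity>)"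
  using limsup_c_seq_p_DM_finite limsup_c_seq_p_PY_finite limsup_c_seq_p_NGG_finite assms(2,3)
  by blast

end
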